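(* Let $m\ge 1$ be odd and let $p$ be defined by $2p=3m+1$. Starting from the configuration with $m+1$ chips of one color, $m$ chips of each of the other two colors, no jokers and no dominoes, there is a sequence of Rule 1 exchanges only which produces $p-1$ dominoes.
   Context: Game model: a configuration is a tuple $(a,b,c,x,d)$ of nonnegative integers: $a,b,c$ colored chips of three colors, $x$ jokers, $d$ dominoes. Rule 1: remove three chips, consisting of some number $j\in\{0,1,2,3\}$ of jokers together with $3-j$ colored chips of pairwise distinct colors, and add one domino and one joker. *)

theory Defs
  imports Main
begin

text \<open>A configuration (a, b, c, x, d): a, b, c colored chips of the three colors,
  x jokers, d dominoes.\<close>
type_synonym config = "nat \<times> nat \<times> nat \<times> nat \<times> nat"

text \<open>Rule 1: remove j jokers (j in {0,1,2,3}) together with 3 - j colored chips of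
  pairwise distinct colors, and add one domino and one joker.\<close>
inductive rule1 :: "config \<Rightarrow> config \<Rightarrow> bool" where
  j0:   "rule1 (Suc a, Suc b, Suc c, x, d) (a, b, c, Suc x, Suc d)"
| j1ab: "rule1 (Suc a, Suc b, c, Suc x, d) (a, b, c, Suc x, Suc d)"
| j1ac: "rule1 (Suc a, b, Suc c, Suc x, d) (a, b, c, Suc x, Suc d)"
| j1bc: "rule1 (a, Suc b, Suc c, Suc x, d) (a, b, c, Suc x, Suc d)"
| j2a:  "rule1 (Suc a, b, c, Suc (Suc x), d) (a, b, c, Suc x, Suc d)"
| j2b:  "rule1 (a, Suc b, c, Suc (Suc x), d) (a, b, c, Suc x, Suc d)"
| j2c:  "rule1 (a, b, Suc c, Suc (Suc x), d) (a, b, c, Suc x, Suc d)"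
| j3:   "rule1 (a, b, c, Suc (Suc (Suc x)), d) (a, b, c, Suc x, Suc d)"

end

theory Submission
  imports Defs
begin

text \<open>One exchange of three distinct colored chips creates a joker. After that, three
  one-joker exchanges (colors ab, ac, bc) remove two chips of each color and keep the joker,
  gaining three dominoes. Starting from (2k+2, 2k+1, 2k+1), the first exchange leaves
  (2k+1, 2k, 2k) with one joker, and k such rounds give 1 + 3k = p - 1 dominoes.\<close>

lemma rule1_round:
  "rule1\<^sup>*\<^sup>* (Suc (Suc a), Suc (Suc b), Suc (Suc c), Suc x, d) (a, b, c, Suc x, d + 3)"
proof -
  have "rule1 (Suc (Suc a), Suc (Suc b), Suc (Suc c), Suc x, d)
              (Suc a, Suc b, Suc (Suc c), Suc x, Suc d)"
    by (rule rule1.j1ab)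
  moreover have "rule1 (Suc a, Suc b, Suc (Suc c), Suc x, Suc d)
                       (a, Suc b, Suc c, Suc x, Suc (Suc d))"
    by (rule rule1.j1ac)
  moreover have "rule1 (a, Suc b, Suc c, Suc x, Suc (Suc d))
                       (a, b, c, Suc x, d + 3)"
    using rule1.j1bc[of a b c x "Suc (Suc d)"] by (simp add: numeral_eq_Suc)
  ultimately show ?thesis
    by (meson converse_rtranclp_into_rtranclp r_into_rtranclp)
qed

lemma rule1_rounds:
  "rule1\<^sup>*\<^sup>* (a + 2 * n, b + 2 * n, c + 2 * n, Suc x, d) (a, b, c, Suc x, d + 3 * n)"
proof (induction n arbitrary: d)
  case 0
  then show ?case by simp
next
  case (Suc n)
  have "rule1\<^sup>*\<^sup>* (a + 2 * Suc n, b + 2 * Suc n, c + 2 * Suc n, Suc x, d)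
                   (a + 2 * n, b + 2 * n, c + 2 * n, Suc x, d + 3)"
    using rule1_round[of "a + 2 * n" "b + 2 * n" "c + 2 * n" x d] by simp
  also have "rule1\<^sup>*\<^sup>* \<dots> (a, b, c, Suc x, d + 3 + 3 * n)"
    by (rule Suc.IH)
  finally show ?case by (simp add: add.assoc)
qed

theorem mainTheorem3:
  fixes m p :: nat
  assumes "odd m" and "m \<ge> 1" and "2 * p = 3 * m + 1"
  shows "\<exists>a b c x. rule1\<^sup>*\<^sup>* (m + 1, m, m, 0, 0) (a, b, c, x, p - 1)"
proof -
  obtain k where m: "m = 2 * k + 1"
    using \<open>odd m\<close> oddE by blast
  have p: "p - 1 = 1 + 3 * k"
    using assms(3) m by simp
  have "rule1 (m + 1, m, m, 0, 0) (1 + 2 * k, 0 + 2 * k, 0 + 2 * k, Suc 0, 1)"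
    using rule1.j0[of "1 + 2 * k" "2 * k" "2 * k" 0 0] m by simp
  also have "rule1\<^sup>*\<^sup>* \<dots> (1, 0, 0, Suc 0, 1 + 3 * k)"
    by (rule rule1_rounds)
  finally show ?thesis
    using p by auto
qed

end
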